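(* Let $(M,f,g)$ be an $(m,n)$-hypermodule over a commutative Krasner $(m,n)$-hyperring $(R,f',g')$ with scalar identity $1$, and let $Q$ be a proper subhypermodule of $M$. Let $S$ be a nonempty subset of $M\setminus\{0\}$ such that for all hyperideals $I_1,\dots,I_{n-1}$ of $R$ and all subhypermodules $N_1,N_2$ of $M$, if $f(N_1,g(I_i,1^{(n-2)},N_2),0^{(m-2)})\cap S\neq\varnothing$ for every $1\le i\le n-1$ then $f(N_1,g(I_1^{n-1},N_2),0^{(m-2)})\cap S\neq\varnothing$. If $Q$ is maximal (among subhypermodules of $M$) with respect to the property $Q\cap S=\varnothing$, then $Q$ is an $n$-ary classical prime subhypermodule of $M$.
   Context: A commutative Krasner $(m,n)$-hyperring with scalar identity $1$ is a triple $(R,f',g')$ where $(R,f')$ is a canonical $m$-ary hypergroup with zero $0$, $(R,g')$ is a commutative $n$-ary semigroup, $g'$ is distributive over $f'$, $0$ is a zero element for $g'$, and $g'(x,1^{(n-1)})=x$. Notation: $x_i^j$ denotes $x_i,\dots,x_j$ and $x^{(k)}$ denotes $x$ repeated $k$ times. A hyperideal $I$ of $R$ is a nonempty subset with $(I,f')$ an $m$-ary subhypergroup and $g'(x_1^{i-1},I,x_{i+1}^n)\subseteq I$. An $(m,n)$-hypermodule over $R$ is a triple $(M,f,g)$ with $(M,f)$ a canonical $m$-ary hypergroup with zero $0$ and $g:R^{n-1}\times M\to P^*(M)$ satisfying: $g(r_1^{n-1},f(x_1^m))=f(g(r_1^{n-1},x_1),\dots,g(r_1^{n-1},x_m))$;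 $g(r_1^{i-1},f'(s_1^m),r_{i+1}^{n-1},x)=f(g(r_1^{i-1},s_1,r_{i+1}^{n-1},x),\dots,g(r_1^{i-1},s_m,r_{i+1}^{n-1},x))$; $g(r_1^{i-1},g'(r_i^{i+n-1}),r_{i+n}^{2n-2},x)=g(r_1^{n-1},g(r_n^{2n-2},x))$; $g(r_1^{i-1},0,r_{i+1}^{n-1},x)=\{0\}$; moreover $g(1^{(n-1)},a)=\{a\}$. Operations applied to subsets mean unions over elements. A subhypermodule of $M$ is a nonempty $N\subseteq M$ with $(N,f)$ an $m$-ary subhypergroup and $g(R^{(n-1)},N)\subseteq N$. A proper subhypermodule $Q$ is $n$-ary classical prime if for all $r_1^{n-1}\in R$, $a\in M$, $g(r_1^{n-1},a)\subseteq Q$ implies $g(r_i,1^{(n-2)},a)\subseteq Q$ for some $1\le i\le n-1$. *)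

theory Defs
  imports Main "HOL-Library.Multiset"
begin

text \<open>Carriers are whole types. An m-ary hyperoperation is a map from lists
(used only at length m) to sets; an n-ary operation maps lists to elements.\<close>

definition sgl :: "'a list \<Rightarrow> 'a set list" where
  "sgl xs = map (\<lambda>x. {x}) xs"

definition hext :: "('a list \<Rightarrow> 'b set) \<Rightarrow> 'a set list \<Rightarrow> 'b set" where
  "hext f As = \<Union> {f xs | xs. list_all2 (\<lambda>x A. x \<in> A) xs As}"

definition hassoc :: "nat \<Rightarrow> ('a list \<Rightarrow> 'a set) \<Rightarrow> bool" where
  "hassoc m f \<longleftrightarrow> (\<forall>xs i j. length xs = 2*m - 1 \<and> i < m \<and> j < m \<longrightarrow>
     hext f (sgl (take i xs) @ [f (take m (drop i xs))] @ sgl (drop (i+m) xs)) =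
     hext f (sgl (take j xs) @ [f (take m (drop j xs))] @ sgl (drop (j+m) xs)))"

definition hcomm :: "nat \<Rightarrow> ('a list \<Rightarrow> 'b) \<Rightarrow> bool" where
  "hcomm m f \<longleftrightarrow> (\<forall>xs ys. length xs = m \<and> mset xs = mset ys \<longrightarrow> f xs = f ys)"

text \<open>m-ary subhypergroup: (K, f) is itself an m-ary hypergroup
(closure + reproductivity within K; associativity is inherited).\<close>
definition subhypergroup :: "nat \<Rightarrow> ('a list \<Rightarrow> 'a set) \<Rightarrow> 'a set \<Rightarrow> bool" where
  "subhypergroup m f K \<longleftrightarrow> K \<noteq> {} \<and>
     (\<forall>xs. length xs = m \<and> set xs \<subseteq> K \<longrightarrow> f xs \<subseteq> K) \<and>
     (\<forall>xs i. length xs = m - 1 \<and> set xs \<subseteq> K \<and> i \<le> m - 1 \<longrightarrow>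
        hext f (sgl (take i xs) @ [K] @ sgl (drop i xs)) = K)"

definition hinv :: "nat \<Rightarrow> ('a list \<Rightarrow> 'a set) \<Rightarrow> 'a \<Rightarrow> 'a \<Rightarrow> 'a" where
  "hinv m f e x = (THE y. e \<in> f (x # y # replicate (m-2) e))"

definition canonical_hypergroup :: "nat \<Rightarrow> ('a list \<Rightarrow> 'a set) \<Rightarrow> 'a \<Rightarrow> bool" where
  "canonical_hypergroup m f e \<longleftrightarrow> m \<ge> 2 \<and>
     (\<forall>xs. length xs = m \<longrightarrow> f xs \<noteq> {}) \<and>
     hassoc m f \<and>
     (\<forall>xs i. length xs = m - 1 \<and> i \<le> m - 1 \<longrightarrow>
        hext f (sgl (take i xs) @ [UNIV] @ sgl (drop i xs)) = UNIV) \<and>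
     hcomm m f \<and>
     (\<forall>x. f (x # replicate (m-1) e) = {x}) \<and>
     (\<forall>e'. (\<forall>x. f (x # replicate (m-1) e') = {x}) \<longrightarrow> e' = e) \<and>
     (\<forall>x. \<exists>!y. e \<in> f (x # y # replicate (m-2) e)) \<and>
     (\<forall>xs x i. length xs = m \<and> x \<in> f xs \<and> i < m \<longrightarrow>
        xs ! i \<in> f (map (hinv m f e) (rev (take i xs)) @ [x] @
                      map (hinv m f e) (rev (drop (Suc i) xs))))"

definition assoc_op :: "nat \<Rightarrow> ('a list \<Rightarrow> 'a) \<Rightarrow> bool" where
  "assoc_op n g \<longleftrightarrow> (\<forall>xs i j. length xs = 2*n - 1 \<and> i < n \<and> j < n \<longrightarrow>
     g (take i xs @ [g (take n (drop i xs))] @ drop (i+n) xs) =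
     g (take j xs @ [g (take n (drop j xs))] @ drop (j+n) xs))"

definition krasner_hyperring ::
  "nat \<Rightarrow> nat \<Rightarrow> ('r list \<Rightarrow> 'r set) \<Rightarrow> ('r list \<Rightarrow> 'r) \<Rightarrow> 'r \<Rightarrow> 'r \<Rightarrow> bool" where
  "krasner_hyperring m n f' g' z one \<longleftrightarrow>
     canonical_hypergroup m f' z \<and> n \<ge> 2 \<and> assoc_op n g' \<and> hcomm n g' \<and>
     (\<forall>xs ys i. length xs = n - 1 \<and> length ys = m \<and> i \<le> n - 1 \<longrightarrow>
        (\<lambda>y. g' (take i xs @ [y] @ drop i xs)) ` f' ys =
        f' (map (\<lambda>y. g' (take i xs @ [y] @ drop i xs)) ys)) \<and>
     (\<forall>xs i. length xs = n - 1 \<and> i \<le> n - 1 \<longrightarrow> g' (take i xs @ [z] @ drop i xs) = z) \<and>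
     (\<forall>x. g' (x # replicate (n-1) one) = x)"

definition hyperideal ::
  "nat \<Rightarrow> nat \<Rightarrow> ('r list \<Rightarrow> 'r set) \<Rightarrow> ('r list \<Rightarrow> 'r) \<Rightarrow> 'r set \<Rightarrow> bool" where
  "hyperideal m n f' g' I \<longleftrightarrow> subhypergroup m f' I \<and>
     (\<forall>xs i. length xs = n - 1 \<and> i \<le> n - 1 \<longrightarrow>
        (\<lambda>y. g' (take i xs @ [y] @ drop i xs)) ` I \<subseteq> I)"

definition gext :: "('r list \<Rightarrow> 'a \<Rightarrow> 'a set) \<Rightarrow> 'r set list \<Rightarrow> 'a set \<Rightarrow> 'a set" where
  "gext g Is N = \<Union> {g rs x | rs x. list_all2 (\<lambda>r I. r \<in> I) rs Is \<and> x \<in> N}"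

definition hypermodule ::
  "nat \<Rightarrow> nat \<Rightarrow> ('r list \<Rightarrow> 'r set) \<Rightarrow> ('r list \<Rightarrow> 'r) \<Rightarrow> 'r \<Rightarrow> 'r \<Rightarrow>
   ('a list \<Rightarrow> 'a set) \<Rightarrow> ('r list \<Rightarrow> 'a \<Rightarrow> 'a set) \<Rightarrow> 'a \<Rightarrow> bool" where
  "hypermodule m n f' g' z one f g zm \<longleftrightarrow>
     krasner_hyperring m n f' g' z one \<and> canonical_hypergroup m f zm \<and>
     (\<forall>rs x. length rs = n - 1 \<longrightarrow> g rs x \<noteq> {}) \<and>
     (\<forall>rs xs. length rs = n - 1 \<and> length xs = m \<longrightarrow>
        (\<Union>y\<in>f xs. g rs y) = hext f (map (g rs) xs)) \<and>
     (\<forall>rs ss i x. length rs = n - 2 \<and> length ss = m \<and> i \<le> n - 2 \<longrightarrow>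
        (\<Union>s\<in>f' ss. g (take i rs @ [s] @ drop i rs) x) =
        hext f (map (\<lambda>s. g (take i rs @ [s] @ drop i rs) x) ss)) \<and>
     (\<forall>rs i x. length rs = 2*n - 2 \<and> i < n - 1 \<longrightarrow>
        g (take i rs @ [g' (take n (drop i rs))] @ drop (i+n) rs) x =
        (\<Union>y\<in>g (drop (n-1) rs) x. g (take (n-1) rs) y)) \<and>
     (\<forall>rs i x. length rs = n - 2 \<and> i \<le> n - 2 \<longrightarrow>
        g (take i rs @ [z] @ drop i rs) x = {zm}) \<and>
     (\<forall>a. g (replicate (n-1) one) a = {a})"

definition subhypermodule ::
  "nat \<Rightarrow> nat \<Rightarrow> ('a list \<Rightarrow> 'a set) \<Rightarrow> ('r list \<Rightarrow> 'a \<Rightarrow> 'a set) \<Rightarrow> 'a set \<Rightarrow> bool" where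
  "subhypermodule m n f g N \<longleftrightarrow> subhypergroup m f N \<and>
     gext g (replicate (n-1) UNIV) N \<subseteq> N"

definition classical_prime ::
  "nat \<Rightarrow> nat \<Rightarrow> ('a list \<Rightarrow> 'a set) \<Rightarrow> ('r list \<Rightarrow> 'a \<Rightarrow> 'a set) \<Rightarrow> 'r \<Rightarrow> 'a set \<Rightarrow> bool" where
  "classical_prime m n f g one Q \<longleftrightarrow> subhypermodule m n f g Q \<and> Q \<noteq> UNIV \<and>
     (\<forall>rs a. length rs = n - 1 \<and> g rs a \<subseteq> Q \<longrightarrow>
        (\<exists>i < n - 1. g (rs ! i # replicate (n-2) one) a \<subseteq> Q))"

end

theory Submission
  imports Defs "HOL-Combinatorics.Permutations"
begin

text \<open>Suppose g(r_1, ..., r_{n-1}, a) is contained in Q but no g(r_i, 1, ..., 1, a) is. Let N = Ra be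
  the cyclic subhypermodule generated by a, and let I_i be a hyperideal containing r_i all of whose
  elements act inside r_i R. Each Q + r_i N is a subhypermodule properly containing Q, so by
  maximality it meets S; and it lies in f(Q, g(I_i, 1, ..., 1, N), 0, ..., 0). The hypothesis on S
  then makes f(Q, g(I_1, ..., I_{n-1}, N), 0, ..., 0) meet S. But g(I_1, ..., I_{n-1}, N) lies in
  R g(r_1, ..., r_{n-1}, a), which lies in Q, so that set lies in Q, which is disjoint from S.\<close>

lemma list_all2_mem_sgl_iff: "list_all2 (\<lambda>x A. x \<in> A) xs (sgl ys) \<longleftrightarrow> xs = ys"
  unfolding sgl_def by (induction ys arbitrary: xs) (auto simp: list_all2_Cons2)

lemma list_all2_mem_replicate_singleton_iff:
  "list_all2 (\<lambda>x A. x \<in> A) xs (replicate k {c}) \<longleftrightarrow> xs = replicate k c"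
  by (induction k arbitrary: xs) (auto simp: list_all2_Cons2)

lemma hext_iff: "y \<in> hext F As \<longleftrightarrow> (\<exists>xs. list_all2 (\<lambda>x A. x \<in> A) xs As \<and> y \<in> F xs)"
  unfolding hext_def by auto

lemma hext_sgl: "hext F (sgl xs) = F xs"
  unfolding hext_def by (auto simp: list_all2_mem_sgl_iff)

lemma hext_append_Cons_iff:
  "y \<in> hext F (As @ [B] @ Cs) \<longleftrightarrow>
    (\<exists>as b cs. list_all2 (\<lambda>x A. x \<in> A) as As \<and> b \<in> B \<and> list_all2 (\<lambda>x A. x \<in> A) cs Cs \<and>
      y \<in> F (as @ [b] @ cs))"
proof
  assume "y \<in> hext F (As @ [B] @ Cs)"
  then obtain xs where "list_all2 (\<lambda>x A. x \<in> A) xs (As @ [B] @ Cs)" "y \<in> F xs"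
    unfolding hext_iff by blast
  then show "\<exists>as b cs. list_all2 (\<lambda>x A. x \<in> A) as As \<and> b \<in> B \<and>
      list_all2 (\<lambda>x A. x \<in> A) cs Cs \<and> y \<in> F (as @ [b] @ cs)"
    by (auto simp: list_all2_append2 list_all2_Cons2)
next
  assume "\<exists>as b cs. list_all2 (\<lambda>x A. x \<in> A) as As \<and> b \<in> B \<and>
      list_all2 (\<lambda>x A. x \<in> A) cs Cs \<and> y \<in> F (as @ [b] @ cs)"
  then show "y \<in> hext F (As @ [B] @ Cs)"
    unfolding hext_iff by (blast intro: list_all2_appendI)
qed

lemma hext_mono:
  assumes "list_all2 (\<subseteq>) As Bs"
  shows "hext F As \<subseteq> hext F Bs"
proof -
  have "list_all2 (\<lambda>x A. x \<in> A) xs Bs" if "list_all2 (\<lambda>x A. x \<in> A) xs As" for xs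
    using list_all2_trans[OF _ that assms, of "\<lambda>x A. x \<in> A"] by blast
  then show ?thesis unfolding subset_iff hext_iff by blast
qed

lemma hext_subset:
  assumes "\<And>xs. length xs = length As \<Longrightarrow> set xs \<subseteq> K \<Longrightarrow> F xs \<subseteq> K" and "\<forall>A\<in>set As. A \<subseteq> K"
  shows "hext F As \<subseteq> K"
proof
  fix y assume "y \<in> hext F As"
  then obtain xs where xs: "list_all2 (\<lambda>x A. x \<in> A) xs As" "y \<in> F xs"
    by (auto simp: hext_iff)
  have "set xs \<subseteq> K"
    using xs(1) assms(2) by (fastforce simp: list_all2_conv_all_nth in_set_conv_nth)
  then show "y \<in> K" using assms(1) xs list_all2_lengthD by blast
qed

lemma hext_perm_subset:
  assumes "hcomm (length As) F" and "mset As = mset Bs"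
  shows "hext F As \<subseteq> hext F Bs"
proof
  fix y assume "y \<in> hext F As"
  then obtain xs where xs: "list_all2 (\<lambda>x A. x \<in> A) xs As" "y \<in> F xs"
    by (auto simp: hext_iff)
  obtain p where p: "p permutes {..<length As}" "permute_list p As = Bs"
    using mset_eq_permutation[OF assms(2)[symmetric]] by blast
  have len: "length xs = length As" using xs(1) list_all2_lengthD by blast
  then have "p permutes {..<length xs}" using p(1) by simp
  then have "list_all2 (\<lambda>x A. x \<in> A) (permute_list p xs) Bs"
    using xs(1) p(2) list_all2_permute_list_iff by metis
  moreover have "F (permute_list p xs) = F xs"
    using assms(1) p(1) len unfolding hcomm_def by (metis length_permute_list mset_permute_list)
  ultimately show "y \<in> hext F Bs" using xs(2) by (auto simp: hext_iff)
qed

lemma hext_perm: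
  assumes "hcomm (length As) F" and "mset As = mset Bs"
  shows "hext F As = hext F Bs"
proof -
  have "length As = length Bs" using assms(2) by (rule mset_eq_length)
  then have "hcomm (length Bs) F" using assms(1) by simp
  then show ?thesis
    using assms by (intro subset_antisym hext_perm_subset) simp_all
qed

lemma hext_hext_iff:
  assumes "i + k \<le> length Ws"
  shows "y \<in> hext F (take i Ws @ [hext F (take k (drop i Ws))] @ drop (i+k) Ws) \<longleftrightarrow>
    (\<exists>xs. list_all2 (\<lambda>x A. x \<in> A) xs Ws \<and>
      y \<in> hext F (sgl (take i xs) @ [F (take k (drop i xs))] @ sgl (drop (i+k) xs)))"
proof
  assume "y \<in> hext F (take i Ws @ [hext F (take k (drop i Ws))] @ drop (i+k) Ws)"
  then obtain as b cs where h: "list_all2 (\<lambda>x A. x \<in> A) as (take i Ws)"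
    "b \<in> hext F (take k (drop i Ws))" "list_all2 (\<lambda>x A. x \<in> A) cs (drop (i+k) Ws)"
    "y \<in> F (as @ [b] @ cs)"
    unfolding hext_append_Cons_iff by blast
  obtain bs where bs: "list_all2 (\<lambda>x A. x \<in> A) bs (take k (drop i Ws))" "b \<in> F bs"
    using h(2) by (auto simp: hext_iff)
  have len: "length as = i" "length bs = k"
    using h(1) bs(1) assms list_all2_lengthD by fastforce+
  have "Ws = take i Ws @ take k (drop i Ws) @ drop (i+k) Ws"
    by (metis append_take_drop_id drop_drop add.commute)
  then have "list_all2 (\<lambda>x A. x \<in> A) (as @ bs @ cs) Ws"
    using h(1,3) bs(1) by (metis list_all2_appendI)
  moreover have "y \<in> hext F (sgl (take i (as @ bs @ cs)) @ [F (take k (drop i (as @ bs @ cs)))] @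
      sgl (drop (i+k) (as @ bs @ cs)))"
    using len h(4) bs(2) unfolding hext_append_Cons_iff list_all2_mem_sgl_iff by auto
  ultimately show "\<exists>xs. list_all2 (\<lambda>x A. x \<in> A) xs Ws \<and>
      y \<in> hext F (sgl (take i xs) @ [F (take k (drop i xs))] @ sgl (drop (i+k) xs))"
    by blast
next
  assume "\<exists>xs. list_all2 (\<lambda>x A. x \<in> A) xs Ws \<and>
      y \<in> hext F (sgl (take i xs) @ [F (take k (drop i xs))] @ sgl (drop (i+k) xs))"
  then obtain xs b where xs: "list_all2 (\<lambda>x A. x \<in> A) xs Ws"
    and b: "b \<in> F (take k (drop i xs))" "y \<in> F (take i xs @ [b] @ drop (i+k) xs)"
    unfolding hext_append_Cons_iff list_all2_mem_sgl_iff by auto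
  have "b \<in> hext F (take k (drop i Ws))"
    using b(1) xs by (auto simp: hext_iff intro!: list_all2_takeI list_all2_dropI)
  then show "y \<in> hext F (take i Ws @ [hext F (take k (drop i Ws))] @ drop (i+k) Ws)"
    using b(2) xs unfolding hext_append_Cons_iff by (meson list_all2_takeI list_all2_dropI)
qed

lemma hext_assoc:
  assumes "hassoc m F" and "length Ws = 2*m - 1" and "i < m" and "j < m"
  shows "hext F (take i Ws @ [hext F (take m (drop i Ws))] @ drop (i+m) Ws) =
         hext F (take j Ws @ [hext F (take m (drop j Ws))] @ drop (j+m) Ws)"
proof (rule set_eqI)
  fix y
  have i: "i + m \<le> length Ws" and j: "j + m \<le> length Ws" using assms by auto
  have "length xs = 2*m - 1" if "list_all2 (\<lambda>x A. x \<in> A) xs Ws" for xs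
    using assms(2) that list_all2_lengthD by metis
  then show "y \<in> hext F (take i Ws @ [hext F (take m (drop i Ws))] @ drop (i+m) Ws) \<longleftrightarrow>
      y \<in> hext F (take j Ws @ [hext F (take m (drop j Ws))] @ drop (j+m) Ws)"
    using assms(1,3,4) unfolding hassoc_def hext_hext_iff[OF i] hext_hext_iff[OF j] by blast
qed

lemma canonical_hypergroup_unique_inverse:
  "canonical_hypergroup m F e \<Longrightarrow> \<exists>!y. e \<in> F (x # y # replicate (m-2) e)"
  unfolding canonical_hypergroup_def by (elim conjE) blast

lemma hinv_eqI:
  assumes "canonical_hypergroup m F e" and "e \<in> F (x # y # replicate (m-2) e)"
  shows "hinv m F e x = y"
  unfolding hinv_def
  using canonical_hypergroup_unique_inverse[OF assms(1)] assms(2) by (rule the1_equality)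

lemma hinv_mem:
  "canonical_hypergroup m F e \<Longrightarrow> e \<in> F (x # hinv m F e x # replicate (m-2) e)"
  unfolding hinv_def by (rule theI'[OF canonical_hypergroup_unique_inverse])

lemma canonical_hypergroup_arity: "canonical_hypergroup m F e \<Longrightarrow> 2 \<le> m"
  unfolding canonical_hypergroup_def by blast

lemma canonical_hypergroup_reproductive:
  "canonical_hypergroup m F e \<Longrightarrow> length xs = m - 1 \<Longrightarrow> i \<le> m - 1 \<Longrightarrow>
    hext F (sgl (take i xs) @ [UNIV] @ sgl (drop i xs)) = UNIV"
  unfolding canonical_hypergroup_def by blast

lemma canonical_hypergroup_reversible:
  assumes CH: "canonical_hypergroup m F e"
    and len: "length xs = m - 1" and i: "i \<le> m - 1" and y: "y \<in> F (take i xs @ [k] @ drop i xs)"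
  shows "k \<in> F (map (hinv m F e) (rev (take i xs)) @ [y] @ map (hinv m F e) (rev (drop i xs)))"
proof -
  define L where "L = take i xs @ [k] @ drop i xs"
  have rev: "\<forall>xs x i. length xs = m \<and> x \<in> F xs \<and> i < m \<longrightarrow>
      xs ! i \<in> F (map (hinv m F e) (rev (take i xs)) @ [x] @ map (hinv m F e) (rev (drop (Suc i) xs)))"
    using CH unfolding canonical_hypergroup_def by blast
  have "length L = m" "i < m"
    unfolding L_def using len i canonical_hypergroup_arity[OF CH] by auto
  then have "L ! i \<in> F (map (hinv m F e) (rev (take i L)) @ [y] @ map (hinv m F e) (rev (drop (Suc i) L)))"
    using rev y unfolding L_def by blast
  moreover have "L ! i = k" "take i L = take i xs" "drop (Suc i) L = drop i xs"
    unfolding L_def using len i by (auto simp: nth_append)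
  ultimately show ?thesis by simp
qed

lemma subhypergroupI:
  assumes CH: "canonical_hypergroup m F e" and nonempty: "K \<noteq> {}"
    and closed: "\<And>xs. length xs = m \<Longrightarrow> set xs \<subseteq> K \<Longrightarrow> F xs \<subseteq> K"
    and hinv_closed: "\<And>x. x \<in> K \<Longrightarrow> hinv m F e x \<in> K"
  shows "subhypergroup m F K"
  unfolding subhypergroup_def
proof (intro conjI allI impI nonempty)
  show "F xs \<subseteq> K" if "length xs = m \<and> set xs \<subseteq> K" for xs
    using closed that by blast
next
  fix xs i assume h: "length xs = m - 1 \<and> set xs \<subseteq> K \<and> i \<le> m - 1"
  have m: "2 \<le> m" by (rule canonical_hypergroup_arity[OF CH])
  have outside: "y \<in> K" if "k \<in> K" "y \<in> F (take i xs @ [k] @ drop i xs)" for k y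
  proof -
    have "set (take i xs @ [k] @ drop i xs) \<subseteq> K"
      using h that(1) set_take_subset[of i xs] set_drop_subset[of i xs] by auto
    then show "y \<in> K" using closed[of "take i xs @ [k] @ drop i xs"] h m that(2) by auto
  qed
  have inside: "k \<in> K" if "y \<in> K" "y \<in> F (take i xs @ [k] @ drop i xs)" for k y
  proof -
    let ?ys = "map (hinv m F e) (rev (take i xs)) @ [y] @ map (hinv m F e) (rev (drop i xs))"
    have "k \<in> F ?ys" using canonical_hypergroup_reversible[OF CH] h that(2) by blast
    moreover have "length ?ys = m" "set ?ys \<subseteq> K"
      using h m that(1) hinv_closed by (auto dest: in_set_takeD in_set_dropD)
    ultimately show "k \<in> K" using closed by blast
  qed
  show "hext F (sgl (take i xs) @ [K] @ sgl (drop i xs)) = K"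
  proof (rule set_eqI)
    fix y
    have "y \<in> hext F (sgl (take i xs) @ [UNIV] @ sgl (drop i xs))"
      using canonical_hypergroup_reproductive[OF CH, of xs i] h by simp
    then obtain k where "y \<in> F (take i xs @ [k] @ drop i xs)"
      unfolding hext_append_Cons_iff list_all2_mem_sgl_iff by blast
    then show "y \<in> hext F (sgl (take i xs) @ [K] @ sgl (drop i xs)) \<longleftrightarrow> y \<in> K"
      unfolding hext_append_Cons_iff list_all2_mem_sgl_iff using outside inside by blast
  qed
qed

section \<open>The scalar action on a hypermodule\<close>

locale krasner_hypermodule =
  fixes m n :: nat and f' :: "'r list \<Rightarrow> 'r set" and g' :: "'r list \<Rightarrow> 'r" and z one :: 'r
    and f :: "'a list \<Rightarrow> 'a set" and g :: "'r list \<Rightarrow> 'a \<Rightarrow> 'a set" and zm :: 'a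
  assumes hypermodule: "hypermodule m n f' g' z one f g zm"
begin

lemma hyperring: "krasner_hyperring m n f' g' z one"
  using hypermodule unfolding hypermodule_def by simp

lemma ring_canonical: "canonical_hypergroup m f' z"
  using hyperring unfolding krasner_hyperring_def by simp

lemma module_canonical: "canonical_hypergroup m f zm"
  using hypermodule unfolding hypermodule_def by simp

lemma m_ge_2: "2 \<le> m"
  using module_canonical by (rule canonical_hypergroup_arity)

lemma n_ge_2: "2 \<le> n"
  using hyperring unfolding krasner_hyperring_def by simp

lemma f_comm: "hcomm m f"
  using module_canonical unfolding canonical_hypergroup_def by simp

lemma f_assoc: "hassoc m f"
  using module_canonical unfolding canonical_hypergroup_def by simp

lemma f_zeros: "f (x # replicate (m-1) zm) = {x}"
  using module_canonical unfolding canonical_hypergroup_def by simp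

lemma g'_comm: "hcomm n g'"
  using hyperring unfolding krasner_hyperring_def by simp

lemma g'_distrib:
  "length xs = n - 1 \<Longrightarrow> length ys = m \<Longrightarrow> i \<le> n - 1 \<Longrightarrow>
    (\<lambda>y. g' (take i xs @ [y] @ drop i xs)) ` f' ys = f' (map (\<lambda>y. g' (take i xs @ [y] @ drop i xs)) ys)"
  using hyperring unfolding krasner_hyperring_def by simp

lemma g'_zero: "length xs = n - 1 \<Longrightarrow> i \<le> n - 1 \<Longrightarrow> g' (take i xs @ [z] @ drop i xs) = z"
  using hyperring unfolding krasner_hyperring_def by simp

lemma g'_one: "g' (x # replicate (n-1) one) = x"
  using hyperring unfolding krasner_hyperring_def by simp

lemma g_distrib:
  "length rs = n - 1 \<Longrightarrow> length xs = m \<Longrightarrow> (\<Union>y\<in>f xs. g rs y) = hext f (map (g rs) xs)"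
  using hypermodule unfolding hypermodule_def by simp

lemma g_distrib':
  "length rs = n - 2 \<Longrightarrow> length ss = m \<Longrightarrow> i \<le> n - 2 \<Longrightarrow>
    (\<Union>s\<in>f' ss. g (take i rs @ [s] @ drop i rs) x) = hext f (map (\<lambda>s. g (take i rs @ [s] @ drop i rs) x) ss)"
  using hypermodule unfolding hypermodule_def by simp

lemma g_assoc:
  "length rs = 2*n - 2 \<Longrightarrow> i < n - 1 \<Longrightarrow>
    g (take i rs @ [g' (take n (drop i rs))] @ drop (i+n) rs) x = (\<Union>y\<in>g (drop (n-1) rs) x. g (take (n-1) rs) y)"
  using hypermodule unfolding hypermodule_def by simp

lemma g_zero: "length rs = n - 2 \<Longrightarrow> i \<le> n - 2 \<Longrightarrow> g (take i rs @ [z] @ drop i rs) x = {zm}"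
  using hypermodule unfolding hypermodule_def by simp

lemma g_one: "g (replicate (n-1) one) x = {x}"
  using hypermodule unfolding hypermodule_def by simp

lemma g_g'_Cons:
  assumes "length rs = n - 1" and "length ss = n - 2"
  shows "g (g' (rs @ [u]) # ss) x = (\<Union>y\<in>g (u # ss) x. g rs y)"
  using g_assoc[of "rs @ u # ss" 0 x] assms n_ge_2 by simp

definition ones :: "'r list" where
  "ones = replicate (n-2) one"

definition smul :: "'r \<Rightarrow> 'a \<Rightarrow> 'a set" where
  "smul s x = g (s # ones) x"

definition smul_set :: "'r \<Rightarrow> 'a set \<Rightarrow> 'a set" where
  "smul_set s X = (\<Union>x\<in>X. smul s x)"

definition rmul :: "'r \<Rightarrow> 'r \<Rightarrow> 'r" where
  "rmul s t = g' (s # ones @ [t])"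

text \<open>For a singleton, orbit {a} is the cyclic subhypermodule Ra.\<close>

definition orbit :: "'a set \<Rightarrow> 'a set" where
  "orbit X = {y. \<exists>t. \<exists>x\<in>X. y \<in> smul t x}"

lemma length_ones [simp]: "length ones = n - 2"
  unfolding ones_def by simp

lemma one_Cons_ones: "one # ones = replicate (n-1) one"
proof -
  have "n - 1 = Suc (n - 2)" using n_ge_2 by simp
  then show ?thesis unfolding ones_def by simp
qed

lemma ones_snoc_one: "ones @ [one] = replicate (n-1) one"
  by (metis one_Cons_ones ones_def replicate_append_same)

lemma smul_one: "smul one x = {x}"
  unfolding smul_def one_Cons_ones by (rule g_one)

lemma smul_zero: "smul z x = {zm}"
  unfolding smul_def using g_zero[of ones 0 x] by simp

lemma smul_rmul: "smul (rmul s t) x = smul_set s (smul t x)"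
  unfolding smul_def smul_set_def rmul_def
  using g_g'_Cons[of "s # ones" ones t x] n_ge_2 by simp

lemma rmul_comm: "rmul s t = rmul t s"
  using g'_comm n_ge_2 unfolding rmul_def hcomm_def by simp

lemma rmul_one: "rmul u one = u"
  unfolding rmul_def using g'_one[of u] ones_snoc_one by simp

lemma rmul_zero: "rmul u z = z"
  unfolding rmul_def using g'_zero[of "u # ones" "n-1"] n_ge_2 by simp

lemma smul_set_smul_comm: "smul_set s (smul t x) = smul_set t (smul s x)"
  by (metis smul_rmul rmul_comm)

lemma smul_set_comm: "smul_set s (smul_set t X) = smul_set t (smul_set s X)"
  unfolding smul_set_def[of _ X] using smul_set_smul_comm by (simp add: smul_set_def)

lemma smul_set_mono: "X \<subseteq> Y \<Longrightarrow> smul_set s X \<subseteq> smul_set s Y"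
  unfolding smul_set_def by blast

lemma g_eq_smul: "length rs = n - 1 \<Longrightarrow> g rs x = smul (g' (rs @ [one])) x"
  unfolding smul_def using g_g'_Cons[of rs ones one x] one_Cons_ones g_one by simp

lemma g_Cons: "length us = n - 2 \<Longrightarrow> g (u # us) x = smul_set u (g (one # us) x)"
  unfolding smul_set_def smul_def
  using g_g'_Cons[of "u # ones" us one x] g'_one[of u] ones_snoc_one n_ge_2 by simp

lemma g_mset_cong: "length rs = n - 1 \<Longrightarrow> mset rs = mset rs' \<Longrightarrow> g rs x = g rs' x"
proof -
  assume len: "length rs = n - 1" and mset: "mset rs = mset rs'"
  have len': "length rs' = n - 1" using len mset mset_eq_length by metis
  have "length (rs @ [one]) = n" "mset (rs @ [one]) = mset (rs' @ [one])"
    using len mset n_ge_2 by simp_all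
  then have "g' (rs @ [one]) = g' (rs' @ [one])"
    using g'_comm unfolding hcomm_def by blast
  then show ?thesis using g_eq_smul len len' by simp
qed

lemma g_append_ones_eq_foldr:
  "length vs \<le> n - 1 \<Longrightarrow> g (vs @ replicate (n - 1 - length vs) one) x = foldr smul_set vs {x}"
proof (induction vs)
  case Nil
  then show ?case using g_one by simp
next
  case (Cons v vs)
  define k where "k = n - 1 - Suc (length vs)"
  have k: "n - 1 - length vs = Suc k" "n - 1 - length (v # vs) = k"
    unfolding k_def using Cons.prems by simp_all
  have len: "length (vs @ replicate k one) = n - 2" unfolding k_def using Cons.prems by simp
  have "g ((v # vs) @ replicate k one) x = smul_set v (g (one # vs @ replicate k one) x)"
    using g_Cons[OF len, of v x] by simp
  also have "g (one # vs @ replicate k one) x = g (vs @ replicate (Suc k) one) x"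
    using len n_ge_2 by (intro g_mset_cong) simp_all
  also have "\<dots> = foldr smul_set vs {x}"
    using Cons.IH Cons.prems k(1) by simp
  finally show ?case unfolding k(2) by simp
qed

lemma g_eq_foldr: "length us = n - 1 \<Longrightarrow> g us x = foldr smul_set us {x}"
  using g_append_ones_eq_foldr[of us x] by simp

lemma orbit_mono: "X \<subseteq> Y \<Longrightarrow> orbit X \<subseteq> orbit Y"
  unfolding orbit_def by blast

lemma subset_orbit: "X \<subseteq> orbit X"
  unfolding orbit_def using smul_one by blast

lemma smul_subset_orbit: "x \<in> X \<Longrightarrow> smul t x \<subseteq> orbit X"
  unfolding orbit_def by blast

lemma smul_set_subset_orbit: "smul_set t X \<subseteq> orbit X"
  unfolding orbit_def smul_set_def by blast

lemma orbit_orbit_subset: "orbit (orbit X) \<subseteq> orbit X"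
proof
  fix y assume "y \<in> orbit (orbit X)"
  then obtain s t x where "x \<in> X" "y \<in> smul_set t (smul s x)"
    unfolding orbit_def smul_set_def by blast
  then show "y \<in> orbit X" unfolding orbit_def smul_rmul[symmetric] by blast
qed

lemma smul_set_orbit: "smul_set r (orbit X) = orbit (smul_set r X)"
proof -
  have "y \<in> smul_set r (orbit X) \<longleftrightarrow> (\<exists>t. \<exists>x\<in>X. y \<in> smul_set r (smul t x))" for y
    unfolding smul_set_def orbit_def by blast
  moreover have "y \<in> orbit (smul_set r X) \<longleftrightarrow> (\<exists>t. \<exists>x\<in>X. y \<in> smul_set t (smul r x))" for y
    unfolding smul_set_def orbit_def by blast
  ultimately show ?thesis using smul_set_smul_comm by blast
qed

lemma foldr_smul_set_mono: "X \<subseteq> Y \<Longrightarrow> foldr smul_set rs X \<subseteq> foldr smul_set rs Y"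
  by (induction rs) (auto simp: smul_set_mono)

lemma foldr_smul_set_orbit: "foldr smul_set rs (orbit X) = orbit (foldr smul_set rs X)"
  by (induction rs) (auto simp: smul_set_orbit)

lemma smul_zm: "smul r zm = {zm}"
  using smul_rmul[of r z zm] by (simp add: rmul_zero smul_zero smul_set_def)

section \<open>The binary sum of a canonical m-ary hypergroup\<close>

definition f_closed :: "'a set \<Rightarrow> bool" where
  "f_closed K \<longleftrightarrow> (\<forall>xs. length xs = m \<and> set xs \<subseteq> K \<longrightarrow> f xs \<subseteq> K)"

definition hsum :: "'a set \<Rightarrow> 'a set \<Rightarrow> 'a set" where
  "hsum A B = hext f (A # B # replicate (m-2) {zm})"

lemma f_closed_hext_subset:
  "f_closed K \<Longrightarrow> length As = m \<Longrightarrow> \<forall>A\<in>set As. A \<subseteq> K \<Longrightarrow> hext f As \<subseteq> K"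
  unfolding f_closed_def by (rule hext_subset) auto

lemma hext_zeros: "hext f (A # replicate (m-1) {zm}) = A"
proof (rule set_eqI)
  fix y
  have "y \<in> hext f (A # replicate (m-1) {zm}) \<longleftrightarrow> (\<exists>x\<in>A. y \<in> f (x # replicate (m-1) zm))"
    unfolding hext_iff list_all2_Cons2 list_all2_mem_replicate_singleton_iff by blast
  then show "y \<in> hext f (A # replicate (m-1) {zm}) \<longleftrightarrow> y \<in> A"
    using f_zeros by auto
qed

lemma length_hsum_args: "length (A # B # replicate (m-2) C) = m"
  using m_ge_2 by simp

lemma hsum_comm: "hsum A B = hsum B A"
  unfolding hsum_def using f_comm by (intro hext_perm) (simp_all only: length_hsum_args, simp)

lemma hsum_zero_right: "hsum A {zm} = A"
proof -
  have "m - 1 = Suc (m - 2)" using m_ge_2 by simp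
  then show ?thesis unfolding hsum_def using hext_zeros[of A] by simp
qed

lemma hsum_zero_left: "hsum {zm} B = B"
  using hsum_comm hsum_zero_right by simp

lemma hsum_mono: "A \<subseteq> A' \<Longrightarrow> B \<subseteq> B' \<Longrightarrow> hsum A B \<subseteq> hsum A' B'"
  unfolding hsum_def by (rule hext_mono) (simp add: list_all2_refl)

lemma hsum_assoc: "hsum (hsum A B) C = hsum A (hsum B C)"
proof -
  define k where "k = m - 2"
  have m: "m = Suc (Suc k)" unfolding k_def using m_ge_2 by simp
  define Ws where "Ws = A # B # replicate k {zm} @ C # replicate k {zm}"
  have "hext f (take 0 Ws @ [hext f (take m (drop 0 Ws))] @ drop (0+m) Ws) =
        hext f (take 1 Ws @ [hext f (take m (drop 1 Ws))] @ drop (1+m) Ws)"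
    by (rule hext_assoc[OF f_assoc]) (simp_all add: Ws_def m)
  then have "hext f (hext f (A # B # replicate k {zm}) # C # replicate k {zm}) =
      hext f (A # hext f (B # replicate k {zm} @ [C]) # replicate k {zm})"
    unfolding Ws_def m by simp
  moreover have "hext f (B # replicate k {zm} @ [C]) = hext f (B # C # replicate k {zm})"
    using f_comm m by (intro hext_perm) simp_all
  ultimately show ?thesis unfolding hsum_def k_def[symmetric] by simp
qed

lemma hext_zero_padded_subset:
  assumes KK: "hsum K K \<subseteq> K"
  shows "Cs \<noteq> [] \<Longrightarrow> length Cs \<le> m \<Longrightarrow> \<forall>C\<in>set Cs. C \<subseteq> K \<Longrightarrow>
    hext f (Cs @ replicate (m - length Cs) {zm}) \<subseteq> K"
proof (induction Cs)
  case Nil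
  then show ?case by simp
next
  case (Cons C Cs)
  show ?case
  proof (cases "Cs = []")
    case True
    then show ?thesis using hext_zeros Cons.prems by simp
  next
    case False
    define l where "l = length Cs"
    have l: "1 \<le> l" "l \<le> m - 1" using False Cons.prems unfolding l_def by (auto simp: Suc_le_eq)
    define Ws where "Ws = C # Cs @ replicate (2*m - 2 - l) {zm}"
    have "hext f (take 0 Ws @ [hext f (take m (drop 0 Ws))] @ drop (0+m) Ws) =
          hext f (take 1 Ws @ [hext f (take m (drop 1 Ws))] @ drop (1+m) Ws)"
      using m_ge_2 l by (intro hext_assoc[OF f_assoc]) (simp_all add: Ws_def l_def)
    moreover have "take m (drop 0 Ws) = C # Cs @ replicate (m - 1 - l) {zm}"
      "drop (0+m) Ws = replicate (m-1) {zm}" "take 1 Ws = [C]"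
      "take m (drop 1 Ws) = Cs @ replicate (m - l) {zm}" "drop (1+m) Ws = replicate (m-2) {zm}"
      unfolding Ws_def using l m_ge_2 by (simp_all add: l_def[symmetric] min_def take_Cons' drop_Cons')
    ultimately have "hext f (C # Cs @ replicate (m - 1 - l) {zm}) =
        hsum C (hext f (Cs @ replicate (m - l) {zm}))"
      unfolding hsum_def using hext_zeros by simp
    also have "\<dots> \<subseteq> hsum K K"
      using Cons False by (intro hsum_mono) (simp_all add: l_def)
    finally show ?thesis using KK by (simp add: l_def)
  qed
qed

lemma f_closed_if_hsum_subset: "hsum K K \<subseteq> K \<Longrightarrow> f_closed K"
  unfolding f_closed_def
proof (intro allI impI)
  fix xs assume KK: "hsum K K \<subseteq> K" and xs: "length xs = m \<and> set xs \<subseteq> K"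
  have "hext f (sgl xs @ replicate (m - length (sgl xs)) {zm}) \<subseteq> K"
    using xs m_ge_2 by (intro hext_zero_padded_subset[OF KK]) (auto simp: sgl_def)
  then show "f xs \<subseteq> K" using xs hext_sgl[of f xs] by (simp add: sgl_def)
qed

lemma hsum_subset_if_f_closed: "f_closed K \<Longrightarrow> zm \<in> K \<Longrightarrow> hsum K K \<subseteq> K"
  unfolding hsum_def by (rule f_closed_hext_subset) (use m_ge_2 in auto)

lemma hsum_hsum_subset:
  assumes "hsum A A \<subseteq> A" and "hsum B B \<subseteq> B"
  shows "hsum (hsum A B) (hsum A B) \<subseteq> hsum A B"
proof -
  have "hsum (hsum A B) (hsum A B) = hsum (hsum A A) (hsum B B)"
    by (metis hsum_assoc hsum_comm)
  also have "\<dots> \<subseteq> hsum A B" using assms by (rule hsum_mono)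
  finally show ?thesis .
qed

definition neg_one :: 'r where
  "neg_one = hinv m f' z one"

lemma f'_distrib_smul: "length ss = m \<Longrightarrow> (\<Union>s\<in>f' ss. smul s x) = hext f (map (\<lambda>s. smul s x) ss)"
  using g_distrib'[of ones ss 0 x] n_ge_2 unfolding smul_def by simp

lemma f_distrib_smul: "length xs = m \<Longrightarrow> (\<Union>y\<in>f xs. smul r y) = hext f (map (smul r) xs)"
  using g_distrib[of "r # ones" xs] n_ge_2 unfolding smul_def[abs_def] by simp

lemma hinv_mem_smul_neg_one: "hinv m f zm x \<in> smul neg_one x"
proof -
  define ss where "ss = one # neg_one # replicate (m-2) z"
  have "zm \<in> (\<Union>s\<in>f' ss. smul s x)"
    using hinv_mem[OF ring_canonical, of one] smul_zero unfolding ss_def neg_one_def by blast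
  also have "\<dots> = hext f ({x} # smul neg_one x # replicate (m-2) {zm})"
    using f'_distrib_smul[of ss x] m_ge_2 unfolding ss_def by (simp add: smul_one smul_zero)
  finally obtain w where "w \<in> smul neg_one x" "zm \<in> f (x # w # replicate (m-2) zm)"
    by (auto simp: hext_iff list_all2_Cons2 list_all2_mem_replicate_singleton_iff)
  then show ?thesis using hinv_eqI[OF module_canonical] by simp
qed

lemma subhypermoduleI:
  assumes "K \<noteq> {}" and "f_closed K" and smul_closed: "\<And>t x. x \<in> K \<Longrightarrow> smul t x \<subseteq> K"
  shows "subhypermodule m n f g K"
  unfolding subhypermodule_def
proof
  show "subhypergroup m f K"
    using assms hinv_mem_smul_neg_one unfolding f_closed_def
    by (intro subhypergroupI[OF module_canonical]) blast+
  show "gext g (replicate (n - 1) UNIV) K \<subseteq> K"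
  proof
    fix y assume "y \<in> gext g (replicate (n - 1) UNIV) K"
    then obtain rs x where "length rs = n - 1" "x \<in> K" "y \<in> g rs x"
      unfolding gext_def by (auto dest: list_all2_lengthD)
    then show "y \<in> K" using g_eq_smul smul_closed by blast
  qed
qed

lemma subhypermodule_f_closed: "subhypermodule m n f g Q \<Longrightarrow> f_closed Q"
  unfolding subhypermodule_def subhypergroup_def f_closed_def by blast

lemma subhypermodule_smul_subset:
  assumes "subhypermodule m n f g Q" and "x \<in> Q"
  shows "smul t x \<subseteq> Q"
proof -
  have "list_all2 (\<lambda>r I. r \<in> I) (t # ones) (replicate (n - 1) UNIV)"
    using n_ge_2 by (simp add: list_all2_conv_all_nth)
  then have "smul t x \<subseteq> gext g (replicate (n-1) UNIV) Q"
    unfolding gext_def smul_def using assms(2) by blast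
  then show ?thesis using assms(1) unfolding subhypermodule_def by blast
qed

lemma subhypermodule_zero_mem: "subhypermodule m n f g Q \<Longrightarrow> zm \<in> Q"
  using subhypermodule_smul_subset[of Q _ z] smul_zero
  unfolding subhypermodule_def subhypergroup_def by blast

lemma orbit_subset_subhypermodule: "subhypermodule m n f g Q \<Longrightarrow> X \<subseteq> Q \<Longrightarrow> orbit X \<subseteq> Q"
  unfolding orbit_def using subhypermodule_smul_subset by blast

lemma f_closed_orbit_singleton: "f_closed (orbit {a})"
  unfolding f_closed_def
proof (intro allI impI)
  fix ws assume ws: "length ws = m \<and> set ws \<subseteq> orbit {a}"
  define ts where "ts = map (\<lambda>w. SOME t. w \<in> smul t a) ws"
  have "\<forall>w\<in>set ws. \<exists>t. w \<in> smul t a" using ws unfolding orbit_def by blast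
  then have "list_all2 (\<lambda>x A. x \<in> A) ws (map (\<lambda>s. smul s a) ts)"
    unfolding ts_def by (auto simp: list_all2_conv_all_nth intro: someI_ex)
  then have "f ws \<subseteq> hext f (map (\<lambda>s. smul s a) ts)" unfolding hext_def by blast
  also have "\<dots> = (\<Union>s\<in>f' ts. smul s a)" using f'_distrib_smul[of ts a] ws unfolding ts_def by simp
  also have "\<dots> \<subseteq> orbit {a}" unfolding orbit_def by blast
  finally show "f ws \<subseteq> orbit {a}" .
qed

lemma subhypermodule_orbit_singleton: "subhypermodule m n f g (orbit {a})"
  using f_closed_orbit_singleton subset_orbit smul_subset_orbit orbit_orbit_subset
  by (intro subhypermoduleI) blast+

lemma hext_smul_set_subset:
  assumes len: "length As = m"
  shows "hext f (map (smul_set r) As) \<subseteq> smul_set r (hext f As)"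
proof
  fix y assume "y \<in> hext f (map (smul_set r) As)"
  then obtain ws where ws: "list_all2 (\<lambda>x A. x \<in> A) ws (map (smul_set r) As)" "y \<in> f ws"
    unfolding hext_iff by blast
  have "\<forall>j<m. \<exists>x. x \<in> As ! j \<and> ws ! j \<in> smul r x"
    using ws(1) len unfolding list_all2_conv_all_nth smul_set_def by fastforce
  then obtain pre where pre: "\<forall>j<m. pre j \<in> As ! j \<and> ws ! j \<in> smul r (pre j)"
    by metis
  define xs where "xs = map pre [0..<m]"
  have "list_all2 (\<lambda>x A. x \<in> A) ws (map (smul r) xs)"
    using pre ws(1) len unfolding xs_def by (auto simp: list_all2_conv_all_nth)
  then have "y \<in> hext f (map (smul r) xs)" using ws(2) unfolding hext_iff by blast
  then have "y \<in> (\<Union>v\<in>f xs. smul r v)"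
    using f_distrib_smul[of xs r] unfolding xs_def by simp
  then obtain v where v: "v \<in> f xs" "y \<in> smul r v" by blast
  have "list_all2 (\<lambda>x A. x \<in> A) xs As" using pre len unfolding xs_def by (auto simp: list_all2_conv_all_nth)
  then have "v \<in> hext f As" using v(1) unfolding hext_iff by blast
  then show "y \<in> smul_set r (hext f As)" using v(2) unfolding smul_set_def by blast
qed

lemma hsum_smul_subset:
  assumes "\<And>x. x \<in> A \<Longrightarrow> smul t x \<subseteq> A" and "\<And>x. x \<in> B \<Longrightarrow> smul t x \<subseteq> B"
    and "y \<in> hsum A B"
  shows "smul t y \<subseteq> hsum A B"
proof -
  obtain a b where ab: "a \<in> A" "b \<in> B" "y \<in> f (a # b # replicate (m-2) zm)"
    using assms(3) unfolding hsum_def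
    by (auto simp: hext_iff list_all2_Cons2 list_all2_mem_replicate_singleton_iff)
  have "smul t y \<subseteq> (\<Union>v\<in>f (a # b # replicate (m-2) zm). smul t v)" using ab(3) by blast
  also have "\<dots> = hext f (smul t a # smul t b # replicate (m-2) {zm})"
    using f_distrib_smul m_ge_2 by (simp add: smul_zm)
  also have "\<dots> \<subseteq> hsum A B" unfolding hsum_def
    using assms(1,2) ab by (intro hext_mono) (simp add: list_all2_refl)
  finally show ?thesis .
qed

lemma subhypermodule_smul_set:
  assumes N: "subhypermodule m n f g N"
  shows "subhypermodule m n f g (smul_set r N)"
proof (rule subhypermoduleI)
  show "smul_set r N \<noteq> {}"
    using subhypermodule_zero_mem[OF N] smul_zm unfolding smul_set_def by blast
  show "f_closed (smul_set r N)" unfolding f_closed_def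
  proof (intro allI impI)
    fix xs assume xs: "length xs = m \<and> set xs \<subseteq> smul_set r N"
    have "f xs = hext f (sgl xs)" by (simp add: hext_sgl)
    also have "\<dots> \<subseteq> hext f (map (smul_set r) (replicate m N))"
      using xs by (intro hext_mono) (auto simp: sgl_def list_all2_conv_all_nth dest!: nth_mem)
    also have "\<dots> \<subseteq> smul_set r (hext f (replicate m N))"
      by (rule hext_smul_set_subset) simp
    also have "\<dots> \<subseteq> smul_set r N"
      using subhypermodule_f_closed[OF N] by (intro smul_set_mono f_closed_hext_subset) auto
    finally show "f xs \<subseteq> smul_set r N" .
  qed
  fix t x assume "x \<in> smul_set r N"
  then obtain v where v: "v \<in> N" "x \<in> smul r v" unfolding smul_set_def by blast
  have "smul t x \<subseteq> smul_set t (smul r v)" using v(2) unfolding smul_set_def by blast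
  also have "\<dots> = smul_set r (smul t v)" by (rule smul_set_smul_comm)
  also have "\<dots> \<subseteq> smul_set r N"
    using subhypermodule_smul_subset[OF N v(1)] by (rule smul_set_mono)
  finally show "smul t x \<subseteq> smul_set r N" .
qed

lemma subhypermodule_hsum:
  assumes A: "subhypermodule m n f g A" and B: "subhypermodule m n f g B"
  shows "subhypermodule m n f g (hsum A B)"
proof (rule subhypermoduleI)
  show "hsum A B \<noteq> {}"
    using subhypermodule_zero_mem[OF A] subhypermodule_zero_mem[OF B] hsum_zero_left
      hsum_mono[of "{zm}" A B B] by blast
  have "hsum A A \<subseteq> A" "hsum B B \<subseteq> B"
    using A B by (simp_all add: hsum_subset_if_f_closed subhypermodule_f_closed subhypermodule_zero_mem)
  then show "f_closed (hsum A B)"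
    by (intro f_closed_if_hsum_subset hsum_hsum_subset)
  show "smul t x \<subseteq> hsum A B" if "x \<in> hsum A B" for t x
    using subhypermodule_smul_subset[OF A] subhypermodule_smul_subset[OF B] that
    by (rule hsum_smul_subset)
qed

lemma subset_hsum_left: "zm \<in> B \<Longrightarrow> A \<subseteq> hsum A B"
  using hsum_mono[of A A "{zm}" B] hsum_zero_right by auto

lemma subset_hsum_right: "zm \<in> A \<Longrightarrow> B \<subseteq> hsum A B"
  using hsum_mono[of "{zm}" A B B] hsum_zero_left by auto

section \<open>Hyperideals of multiples\<close>

text \<open>A substitute for the principal hyperideal generated by r: the scalars whose action is dominated
  by that of r. Being a hyperideal that contains r is all the argument needs.\<close>

definition multiples :: "'r \<Rightarrow> 'r set" where
  "multiples r = {u. \<forall>y. smul u y \<subseteq> smul_set r (orbit {y})}"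

lemma mem_multiples_self: "r \<in> multiples r"
  unfolding multiples_def smul_set_def using subset_orbit by blast

lemma smul_set_multiples_subset: "u \<in> multiples r \<Longrightarrow> smul_set u W \<subseteq> smul_set r (orbit W)"
  unfolding multiples_def smul_set_def using orbit_mono[of "{_}" W] by blast

lemma multiples_if_smul_set_orbit_subset:
  "(\<And>y. smul u y \<subseteq> smul_set r (orbit (orbit {y}))) \<Longrightarrow> u \<in> multiples r"
  unfolding multiples_def using smul_set_mono[OF orbit_orbit_subset] by blast

lemma f'_subset_multiples:
  assumes len: "length us = m" and us: "set us \<subseteq> multiples r"
  shows "f' us \<subseteq> multiples r"
proof
  fix u assume u: "u \<in> f' us"
  show "u \<in> multiples r" unfolding multiples_def
  proof (intro CollectI allI)
    fix y
    have "smul u y \<subseteq> (\<Union>s\<in>f' us. smul s y)" using u by blast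
    also have "\<dots> = hext f (map (\<lambda>s. smul s y) us)" by (rule f'_distrib_smul[OF len])
    also have "\<dots> \<subseteq> hext f (map (smul_set r) (replicate m (orbit {y})))"
      using us len unfolding multiples_def
      by (intro hext_mono) (auto simp: list_all2_conv_all_nth dest!: nth_mem)
    also have "\<dots> \<subseteq> smul_set r (hext f (replicate m (orbit {y})))"
      by (rule hext_smul_set_subset) simp
    also have "\<dots> \<subseteq> smul_set r (orbit {y})"
      by (intro smul_set_mono f_closed_hext_subset[OF f_closed_orbit_singleton]) auto
    finally show "smul u y \<subseteq> smul_set r (orbit {y})" .
  qed
qed

lemma hinv_ring_eq_rmul: "hinv m f' z u = rmul u neg_one"
proof (rule hinv_eqI[OF ring_canonical])
  define ss where "ss = one # neg_one # replicate (m-2) z"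
  have ss: "length ss = m" unfolding ss_def using m_ge_2 by simp
  have us: "length (u # ones) = n - 1" using n_ge_2 by simp
  have rmul_eq: "(\<lambda>y. g' (take (n-1) (u # ones) @ [y] @ drop (n-1) (u # ones))) = rmul u"
    unfolding rmul_def using us by simp
  have "rmul u ` f' ss = f' (map (rmul u) ss)"
    using g'_distrib[OF us ss, of "n-1"] unfolding rmul_eq by simp
  moreover have "z \<in> rmul u ` f' ss"
    using hinv_mem[OF ring_canonical] rmul_zero unfolding ss_def neg_one_def by (metis image_eqI)
  moreover have "map (rmul u) ss = u # rmul u neg_one # replicate (m-2) z"
    unfolding ss_def by (simp add: rmul_one rmul_zero)
  ultimately show "z \<in> f' (u # rmul u neg_one # replicate (m-2) z)" by simp
qed

lemma hinv_mem_multiples: "u \<in> multiples r \<Longrightarrow> hinv m f' z u \<in> multiples r"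
proof (rule multiples_if_smul_set_orbit_subset)
  fix y assume u: "u \<in> multiples r"
  have "smul (hinv m f' z u) y = smul_set u (smul neg_one y)"
    unfolding hinv_ring_eq_rmul by (rule smul_rmul)
  also have "\<dots> \<subseteq> smul_set u (orbit {y})" by (intro smul_set_mono smul_subset_orbit) simp
  also have "\<dots> \<subseteq> smul_set r (orbit (orbit {y}))" by (rule smul_set_multiples_subset[OF u])
  finally show "smul (hinv m f' z u) y \<subseteq> smul_set r (orbit (orbit {y}))" .
qed

lemma g'_mem_multiples:
  assumes xs: "length xs = n - 1" and i: "i \<le> n - 1" and u: "u \<in> multiples r"
  shows "g' (take i xs @ [u] @ drop i xs) \<in> multiples r"
proof -
  have "mset (take i xs @ [u] @ drop i xs) = mset (take i xs @ drop i xs) + {#u#}"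
    by (simp only: mset_append) simp
  then have "length (take i xs @ [u] @ drop i xs) = n" "mset (take i xs @ [u] @ drop i xs) = mset (xs @ [u])"
    using xs i n_ge_2 by auto
  then have v: "g' (take i xs @ [u] @ drop i xs) = g' (xs @ [u])"
    using g'_comm unfolding hcomm_def by blast
  define c where "c = g' (xs @ [one])"
  show ?thesis unfolding v
  proof (rule multiples_if_smul_set_orbit_subset)
    fix y
    have "smul (g' (xs @ [u])) y = smul_set c (smul u y)"
      unfolding smul_def smul_set_def c_def using g_g'_Cons[OF xs, of ones u y] g_eq_smul[OF xs]
      by (simp add: smul_def)
    also have "\<dots> \<subseteq> smul_set c (smul_set r (orbit {y}))"
      using u unfolding multiples_def by (intro smul_set_mono) blast
    also have "\<dots> = smul_set r (smul_set c (orbit {y}))" by (rule smul_set_comm)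
    also have "\<dots> \<subseteq> smul_set r (orbit (orbit {y}))" by (intro smul_set_mono smul_set_subset_orbit)
    finally show "smul (g' (xs @ [u])) y \<subseteq> smul_set r (orbit (orbit {y}))" .
  qed
qed

lemma hyperideal_multiples: "hyperideal m n f' g' (multiples r)"
  unfolding hyperideal_def
proof (intro conjI allI impI subhypergroupI[OF ring_canonical])
  show "multiples r \<noteq> {}" using mem_multiples_self by blast
qed (use f'_subset_multiples hinv_mem_multiples g'_mem_multiples in auto)

lemma foldr_smul_set_multiples_subset:
  "list_all2 (\<lambda>u r. u \<in> multiples r) us rs \<Longrightarrow> foldr smul_set us X \<subseteq> foldr smul_set rs (orbit X)"
proof (induction rule: list_all2_induct)
  case Nil
  then show ?case by (simp add: subset_orbit)
next
  case (Cons u us r rs)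
  have "foldr smul_set (u # us) X \<subseteq> smul_set u (foldr smul_set rs (orbit X))"
    using Cons.IH by (simp add: smul_set_mono)
  also have "\<dots> \<subseteq> smul_set r (orbit (foldr smul_set rs (orbit X)))"
    by (rule smul_set_multiples_subset[OF Cons.hyps(1)])
  also have "\<dots> \<subseteq> smul_set r (foldr smul_set rs (orbit X))"
    unfolding foldr_smul_set_orbit[symmetric]
    by (intro smul_set_mono foldr_smul_set_mono orbit_orbit_subset)
  finally show ?case by simp
qed

lemma gext_multiples_subset:
  assumes len: "length rs = n - 1"
  shows "gext g (map multiples rs) (orbit {a}) \<subseteq> orbit (g rs a)"
proof
  fix y assume "y \<in> gext g (map multiples rs) (orbit {a})"
  then obtain us x where us: "list_all2 (\<lambda>u r. u \<in> multiples r) us rs"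
    and x: "x \<in> orbit {a}" and y: "y \<in> g us x"
    unfolding gext_def by (auto simp: list_all2_map2)
  have "g us x = foldr smul_set us {x}"
    using us len by (intro g_eq_foldr) (simp add: list_all2_lengthD)
  also have "\<dots> \<subseteq> foldr smul_set rs (orbit {x})" by (rule foldr_smul_set_multiples_subset[OF us])
  also have "\<dots> \<subseteq> foldr smul_set rs (orbit {a})"
    using orbit_mono[of "{x}" "orbit {a}"] orbit_orbit_subset x by (intro foldr_smul_set_mono) blast
  also have "\<dots> = orbit (g rs a)" by (simp add: foldr_smul_set_orbit g_eq_foldr[OF len])
  finally show "y \<in> orbit (g rs a)" using y by blast
qed

lemma smul_set_subset_gext: "smul_set r N \<subseteq> gext g (multiples r # replicate (n-2) {one}) N"
  unfolding smul_set_def smul_def gext_def ones_def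
  using mem_multiples_self by (fastforce simp: list_all2_mem_replicate_singleton_iff)

lemma hsum_meets_if_maximal:
  assumes Q: "subhypermodule m n f g Q"
    and Qmax: "\<forall>N. subhypermodule m n f g N \<and> Q \<subseteq> N \<and> N \<inter> S = {} \<longrightarrow> N = Q"
    and X: "subhypermodule m n f g X" and "\<not> X \<subseteq> Q"
  shows "hsum Q X \<inter> S \<noteq> {}"
proof
  assume "hsum Q X \<inter> S = {}"
  moreover have "Q \<subseteq> hsum Q X" "X \<subseteq> hsum Q X"
    using subhypermodule_zero_mem[OF Q] subhypermodule_zero_mem[OF X]
    by (simp_all add: subset_hsum_left subset_hsum_right)
  ultimately have "hsum Q X = Q" using Qmax subhypermodule_hsum[OF Q X] by blast
  then show False using \<open>X \<subseteq> hsum Q X\<close> \<open>\<not> X \<subseteq> Q\<close> by blast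
qed


lemma hsum_gext_multiples_meets:
  assumes Q: "subhypermodule m n f g Q"
    and Qmax: "\<forall>N. subhypermodule m n f g N \<and> Q \<subseteq> N \<and> N \<inter> S = {} \<longrightarrow> N = Q"
    and "\<not> smul r a \<subseteq> Q"
  shows "hsum Q (gext g (multiples r # replicate (n-2) {one}) (orbit {a})) \<inter> S \<noteq> {}"
proof -
  have "\<not> smul_set r (orbit {a}) \<subseteq> Q"
    using assms(3) subset_orbit[of "{a}"] unfolding smul_set_def by blast
  with Q Qmax subhypermodule_smul_set[OF subhypermodule_orbit_singleton]
  have "hsum Q (smul_set r (orbit {a})) \<inter> S \<noteq> {}" by (rule hsum_meets_if_maximal)
  then show ?thesis using hsum_mono[OF order_refl smul_set_subset_gext] by blast
qed

lemma hsum_gext_multiples_subset: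
  assumes Q: "subhypermodule m n f g Q" and "length rs = n - 1" and "g rs a \<subseteq> Q"
  shows "hsum Q (gext g (map multiples rs) (orbit {a})) \<subseteq> Q"
proof -
  have "gext g (map multiples rs) (orbit {a}) \<subseteq> Q"
    using gext_multiples_subset orbit_subset_subhypermodule[OF Q] assms(2,3) by blast
  then have "hsum Q (gext g (map multiples rs) (orbit {a})) \<subseteq> hsum Q Q"
    by (rule hsum_mono[OF order_refl])
  also have "\<dots> \<subseteq> Q"
    using Q by (simp add: hsum_subset_if_f_closed subhypermodule_f_closed subhypermodule_zero_mem)
  finally show ?thesis .
qed

end

theorem mainTheorem2:
  fixes f' :: "'r list \<Rightarrow> 'r set" and g' :: "'r list \<Rightarrow> 'r" and z one :: 'r
    and f :: "'a list \<Rightarrow> 'a set" and g :: "'r list \<Rightarrow> 'a \<Rightarrow> 'a set" and zm :: 'a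
    and m n :: nat and Q S :: "'a set"
  assumes hm: "hypermodule m n f' g' z one f g zm"
    and Qsub: "subhypermodule m n f g Q" and Qprop: "Q \<noteq> UNIV"
    and Sne: "S \<noteq> {}" and Ssub: "S \<subseteq> UNIV - {zm}"
    and Scond: "\<forall>Is N1 N2. length Is = n - 1 \<and> (\<forall>I\<in>set Is. hyperideal m n f' g' I) \<and>
        subhypermodule m n f g N1 \<and> subhypermodule m n f g N2 \<and>
        (\<forall>i < n - 1. hext f ([N1, gext g (Is ! i # replicate (n-2) {one}) N2] @ replicate (m-2) {zm}) \<inter> S \<noteq> {})
        \<longrightarrow> hext f ([N1, gext g Is N2] @ replicate (m-2) {zm}) \<inter> S \<noteq> {}"
    and Qdisj: "Q \<inter> S = {}"
    and Qmax: "\<forall>N. subhypermodule m n f g N \<and> Q \<subseteq> N \<and> N \<inter> S = {} \<longrightarrow> N = Q"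
  shows "classical_prime m n f g one Q"
proof -
  interpret krasner_hypermodule m n f' g' z one f g zm by (rule krasner_hypermodule.intro[OF hm])
  show ?thesis unfolding classical_prime_def
  proof (intro conjI allI impI Qsub Qprop)
    fix rs a assume rs: "length rs = n - 1 \<and> g rs a \<subseteq> Q"
    let ?N = "orbit {a}" and ?Is = "map multiples rs"
    show "\<exists>i<n - 1. g (rs ! i # replicate (n-2) one) a \<subseteq> Q"
    proof (rule ccontr)
      assume "\<not> (\<exists>i<n - 1. g (rs ! i # replicate (n-2) one) a \<subseteq> Q)"
      then have "\<forall>i<n - 1. hsum Q (gext g (?Is ! i # replicate (n-2) {one}) ?N) \<inter> S \<noteq> {}"
        using hsum_gext_multiples_meets[OF Qsub Qmax] rs unfolding smul_def ones_def by simp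
      then have "hsum Q (gext g ?Is ?N) \<inter> S \<noteq> {}"
        using Scond[rule_format, of ?Is Q ?N] rs Qsub hyperideal_multiples subhypermodule_orbit_singleton
        unfolding hsum_def by auto
      then show False using hsum_gext_multiples_subset[OF Qsub] rs Qdisj by blast
    qed
  qed
qed

end
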